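(* Let $(\varphi_\alpha)_{\alpha>0}$ be a family of functions $\varphi_\alpha\colon\mathbb{R}\to\mathbb{R}$, each monotonically increasing (non-decreasing) and nonexpansive (i.e. $1$-Lipschitz) with $\varphi_\alpha(0)=0$. Then the following are equivalent: (1) for all $x\in\mathbb{R}$, $\lim_{\alpha\to 0}\varphi_\alpha(x)=x$; (2) for all $x\in\mathbb{R}$, $\lim_{\alpha\to0}\varphi_\alpha^{-1}(x)=\{x\}$.
   Context: For $x\in\mathbb{R}$, $\varphi_\alpha^{-1}(x)=\{y\in\mathbb{R}:\varphi_\alpha(y)=x\}$ denotes the (possibly empty) preimage. The statement $\lim_{\alpha\to0}\varphi_\alpha^{-1}(x)=\{x\}$ means by definition $\lim_{\alpha\to 0}\sup_{y\in\varphi_\alpha^{-1}(x)}|y-x|=0$, with the convention $\sup_{y\in\emptyset}|y-x|:=\infty$. *)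

theory Defs
  imports "HOL-Analysis.Analysis"
begin

definition preimage_dev :: "(real \<Rightarrow> real) \<Rightarrow> real \<Rightarrow> ereal" where
  "preimage_dev f x =
     (if f -` {x} = {} then \<infinity> else (SUP y\<in>f -` {x}. ereal \<bar>y - x\<bar>))"

end

theory Submission
  imports Defs
begin

text \<open>If \<open>\<phi>\<^sub>\<alpha> \<rightarrow> id\<close> pointwise, then eventually \<open>\<phi>\<^sub>\<alpha>(x - \<epsilon>) < x < \<phi>\<^sub>\<alpha>(x + \<epsilon>)\<close>;
  by continuity \<open>x\<close> has a preimage, and by monotonicity every preimage lies in
  \<open>(x - \<epsilon>, x + \<epsilon>)\<close>. Conversely, a preimage \<open>y\<close> of \<open>x\<close> with \<open>\<bar>y - x\<bar> < \<epsilon>\<close>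
  gives \<open>\<bar>\<phi>\<^sub>\<alpha> x - x\<bar> = \<bar>\<phi>\<^sub>\<alpha> x - \<phi>\<^sub>\<alpha> y\<bar> \<le> \<bar>x - y\<bar> < \<epsilon>\<close> by nonexpansiveness.
  Monotonicity is needed only for the first direction, nonexpansiveness
  (through continuity) for both, and \<open>\<phi>\<^sub>\<alpha> 0 = 0\<close> for neither.\<close>

lemma preimage_dev_nonneg: "preimage_dev f x \<ge> 0"
proof (cases "f -` {x} = {}")
  case False
  then obtain y where "y \<in> f -` {x}" by blast
  have "ereal 0 \<le> ereal \<bar>y - x\<bar>" by simp
  also have "\<dots> \<le> (SUP y\<in>f -` {x}. ereal \<bar>y - x\<bar>)" using \<open>y \<in> f -` {x}\<close> by (rule SUP_upper)
  finally show ?thesis using False by (simp add: preimage_dev_def zero_ereal_def)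
qed (simp add: preimage_dev_def)

lemma preimage_dev_less_imp_close_preimage:
  assumes "preimage_dev f x < ereal e"
  obtains y where "f y = x" and "\<bar>y - x\<bar> < e"
proof -
  have ne: "f -` {x} \<noteq> {}" using assms by (auto simp: preimage_dev_def)
  then obtain y where y: "y \<in> f -` {x}" by blast
  have "ereal \<bar>y - x\<bar> \<le> (SUP y\<in>f -` {x}. ereal \<bar>y - x\<bar>)" using y by (rule SUP_upper)
  also have "\<dots> < ereal e" using assms ne by (simp add: preimage_dev_def)
  finally show ?thesis using y that by auto
qed

lemma preimage_dev_le_if_bracketed:
  fixes f :: "real \<Rightarrow> real"
  assumes "mono f" and "continuous_on UNIV f"
    and lo: "f (x - e) < x" and hi: "x < f (x + e)"
  shows "preimage_dev f x \<le> ereal e"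
proof -
  have "x - e \<le> x + e"
  proof (rule ccontr)
    assume "\<not> x - e \<le> x + e"
    then have "f (x + e) \<le> f (x - e)" using monoD[OF \<open>mono f\<close>] by simp
    with lo hi show False by simp
  qed
  moreover have "continuous_on {x - e..x + e} f"
    using \<open>continuous_on UNIV f\<close> continuous_on_subset by blast
  ultimately obtain y where "f y = x"
    using IVT'[of f "x - e" x "x + e"] lo hi by (auto simp: less_imp_le)
  then have ne: "f -` {x} \<noteq> {}" by auto
  have "(SUP y\<in>f -` {x}. ereal \<bar>y - x\<bar>) \<le> ereal e"
  proof (rule SUP_least)
    fix y assume y: "y \<in> f -` {x}"
    have "y < x + e"
      using y hi monoD[OF \<open>mono f\<close>, of "x + e" y] by force
    moreover have "x - e < y"
      using y lo monoD[OF \<open>mono f\<close>, of y "x - e"] by force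
    ultimately show "ereal \<bar>y - x\<bar> \<le> ereal e" by auto
  qed
  then show ?thesis using ne by (simp add: preimage_dev_def)
qed

lemma tendsto_preimage_dev_zero_iff:
  "((\<lambda>a. preimage_dev (f a) x) \<longlongrightarrow> 0) F \<longleftrightarrow>
     (\<forall>e>0. eventually (\<lambda>a. preimage_dev (f a) x < ereal e) F)"
proof
  assume "((\<lambda>a. preimage_dev (f a) x) \<longlongrightarrow> 0) F"
  then show "\<forall>e>0. eventually (\<lambda>a. preimage_dev (f a) x < ereal e) F"
    unfolding order_tendsto_iff by (simp add: zero_ereal_def)
next
  assume small: "\<forall>e>0. eventually (\<lambda>a. preimage_dev (f a) x < ereal e) F"
  show "((\<lambda>a. preimage_dev (f a) x) \<longlongrightarrow> 0) F"
    unfolding order_tendsto_iff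
  proof safe
    fix l :: ereal assume "l < 0"
    then show "eventually (\<lambda>a. l < preimage_dev (f a) x) F"
      using preimage_dev_nonneg by (intro always_eventually allI) (rule order.strict_trans2)
  next
    fix u :: ereal assume "u > 0"
    then obtain e where "0 < ereal e" and "ereal e < u" using ereal_dense2 by blast
    with small have "eventually (\<lambda>a. preimage_dev (f a) x < ereal e) F" by simp
    then show "eventually (\<lambda>a. preimage_dev (f a) x < u) F"
      using \<open>ereal e < u\<close> by (auto elim: eventually_mono)
  qed
qed

lemma tendsto_preimage_dev_zero_if_tendsto_id:
  fixes f :: "'a \<Rightarrow> real \<Rightarrow> real"
  assumes regular: "eventually (\<lambda>a. mono (f a) \<and> continuous_on UNIV (f a)) F"
    and to_id: "\<And>x. ((\<lambda>a. f a x) \<longlongrightarrow> x) F"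
  shows "((\<lambda>a. preimage_dev (f a) x) \<longlongrightarrow> 0) F"
  unfolding tendsto_preimage_dev_zero_iff
proof safe
  fix e :: real assume "e > 0"
  then have "eventually (\<lambda>a. f a (x - e/2) < x) F" "eventually (\<lambda>a. x < f a (x + e/2)) F"
    using to_id[of "x - e/2"] to_id[of "x + e/2"] unfolding order_tendsto_iff by auto
  with regular have "eventually (\<lambda>a. preimage_dev (f a) x \<le> ereal (e/2)) F"
    by eventually_elim (simp add: preimage_dev_le_if_bracketed)
  then show "eventually (\<lambda>a. preimage_dev (f a) x < ereal e) F"
  proof (rule eventually_mono)
    show "preimage_dev (f a) x < ereal e" if "preimage_dev (f a) x \<le> ereal (e/2)" for a
      using that \<open>e > 0\<close> by (simp add: order.strict_trans1)
  qed
qed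

lemma tendsto_id_if_tendsto_preimage_dev_zero:
  fixes f :: "'a \<Rightarrow> real \<Rightarrow> real"
  assumes nonexp: "eventually (\<lambda>a. \<forall>x y. \<bar>f a x - f a y\<bar> \<le> \<bar>x - y\<bar>) F"
    and dev: "((\<lambda>a. preimage_dev (f a) x) \<longlongrightarrow> 0) F"
  shows "((\<lambda>a. f a x) \<longlongrightarrow> x) F"
  unfolding tendsto_iff dist_real_def
proof safe
  fix e :: real assume "e > 0"
  with dev have "eventually (\<lambda>a. preimage_dev (f a) x < ereal e) F"
    unfolding tendsto_preimage_dev_zero_iff by blast
  with nonexp show "eventually (\<lambda>a. \<bar>f a x - x\<bar> < e) F"
  proof eventually_elim
    case (elim a)
    then obtain y where "f a y = x" "\<bar>y - x\<bar> < e"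
      by (auto elim: preimage_dev_less_imp_close_preimage)
    moreover have "\<bar>f a x - f a y\<bar> \<le> \<bar>x - y\<bar>" using elim by blast
    ultimately show ?case by linarith
  qed
qed

theorem lemma2p2:
  fixes \<phi> :: "real \<Rightarrow> real \<Rightarrow> real"
  assumes mono: "\<And>\<alpha>. \<alpha> > 0 \<Longrightarrow> mono (\<phi> \<alpha>)"
    and nonexp: "\<And>\<alpha> x y. \<alpha> > 0 \<Longrightarrow> \<bar>\<phi> \<alpha> x - \<phi> \<alpha> y\<bar> \<le> \<bar>x - y\<bar>"
    and zero: "\<And>\<alpha>. \<alpha> > 0 \<Longrightarrow> \<phi> \<alpha> 0 = 0"
  shows "(\<forall>x. ((\<lambda>\<alpha>. \<phi> \<alpha> x) \<longlongrightarrow> x) (at_right 0)) \<longleftrightarrow>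
         (\<forall>x. ((\<lambda>\<alpha>. preimage_dev (\<phi> \<alpha>) x) \<longlongrightarrow> 0) (at_right 0))"
proof -
  have pos: "eventually (\<lambda>\<alpha>::real. \<alpha> > 0) (at_right 0)"
    by (simp add: eventually_at_right_less)
  have "continuous_on UNIV (\<phi> \<alpha>)" if "\<alpha> > 0" for \<alpha>
  proof (rule lipschitz_on_continuous_on)
    show "1-lipschitz_on UNIV (\<phi> \<alpha>)"
      using nonexp[OF that] by (simp add: lipschitz_on_def dist_real_def)
  qed
  with mono have regular: "eventually (\<lambda>\<alpha>. mono (\<phi> \<alpha>) \<and> continuous_on UNIV (\<phi> \<alpha>)) (at_right 0)"
    using pos by (auto elim: eventually_mono)
  have nonexpansive: "eventually (\<lambda>\<alpha>. \<forall>x y. \<bar>\<phi> \<alpha> x - \<phi> \<alpha> y\<bar> \<le> \<bar>x - y\<bar>) (at_right 0)"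
    using pos nonexp by (auto elim: eventually_mono)
  show ?thesis
    using tendsto_preimage_dev_zero_if_tendsto_id[OF regular]
      tendsto_id_if_tendsto_preimage_dev_zero[OF nonexpansive] by blast
qed

end
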